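(* Given two curves $\sigma=(v_1,\dots,v_{m'})$ and $\tau=(w_1,\dots,w_{m''})$ in $\mathbb{R}^d$ and a parameter $k\in\mathbb{N}$, the following algorithm returns exactly $d_{k\text{-}DTW}(\sigma,\tau)$ and runs in $O(m'm''z)$ time, where $z$ is the number of distinct distances $\|v_i-w_j\|$ between pairs of vertices of $\sigma$ and $\tau$. Algorithm: set $D[i,j]=\|v_i-w_j\|$ for all $(i,j)\in[m']\times[m'']$; let $E[1]>\dots>E[z]>E[z+1]=0$ be the $z$ distinct entries of $D$ together with $0$, in decreasing order; set mincost $=\infty$; for each $l\in\{1,\dots,z+1\}$, let $D'[i,j]=\max\{D[i,j]-E[l],0\}$ for all $(i,j)$ and update mincost $\leftarrow\min\{\text{mincost},\ \mathrm{DTW}(D')+k\cdot E[l]\}$; return mincost.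
   Context: A traversal of $\sigma$ and $\tau$ is a sequence of index pairs starting with $(1,1)$, ending with $(m',m'')$, where each $(i,j)$ is followed only by $(i+1,j)$, $(i,j+1)$ or $(i+1,j+1)$. For a matrix $D'\in\mathbb{R}^{m'\times m''}$, $\mathrm{DTW}(D')=\min_T\sum_{(i,j)\in T}D'[i,j]$ over all traversals $T$ (computable in $O(m'm'')$ time by dynamic programming). For a traversal $T$ let $s^{(T)}_1\ge s^{(T)}_2\ge\dots$ be the values $\|v_i-w_j\|$, $(i,j)\in T$, sorted non-increasingly, padded with zeros beyond $|T|$; $d_{k\text{-}DTW}(\sigma,\tau)=\min_T\sum_{l=1}^k s^{(T)}_l$. Running time counts each vertex-to-vertex distance computation and each arithmetic operation as unit cost. *)

theory Defs
  imports "HOL-Analysis.Analysis" "HOL-Library.Extended_Real"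
begin

text \<open>Index pairs are 1-based: (i,j) with 1 <= i <= m1, 1 <= j <= m2.\<close>

definition trav_step :: "nat \<times> nat \<Rightarrow> nat \<times> nat \<Rightarrow> bool" where
  "trav_step p q \<longleftrightarrow> q = (fst p + 1, snd p) \<or> q = (fst p, snd p + 1) \<or> q = (fst p + 1, snd p + 1)"

definition is_traversal :: "nat \<Rightarrow> nat \<Rightarrow> (nat \<times> nat) list \<Rightarrow> bool" where
  "is_traversal m1 m2 T \<longleftrightarrow> T \<noteq> [] \<and> hd T = (1, 1) \<and> last T = (m1, m2) \<and>
     (\<forall>i. Suc i < length T \<longrightarrow> trav_step (T ! i) (T ! Suc i))"

definition DTW :: "nat \<Rightarrow> nat \<Rightarrow> (nat \<Rightarrow> nat \<Rightarrow> real) \<Rightarrow> real" where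
  "DTW m1 m2 D' = Min ((\<lambda>T. sum_list (map (\<lambda>(i, j). D' i j) T)) ` {T. is_traversal m1 m2 T})"

text \<open>Sum of the k largest values ||v_i - w_j||, (i,j) in T (padding with zeros beyond |T|
  amounts to summing fewer terms).\<close>
definition topk_cost :: "nat \<Rightarrow> (nat \<Rightarrow> 'a::real_normed_vector) \<Rightarrow> (nat \<Rightarrow> 'a) \<Rightarrow> (nat \<times> nat) list \<Rightarrow> real" where
  "topk_cost k v w T = sum_list (take k (rev (sort (map (\<lambda>(i, j). norm (v i - w j)) T))))"

definition kDTW :: "nat \<Rightarrow> (nat \<Rightarrow> 'a::real_normed_vector) \<Rightarrow> nat \<Rightarrow> (nat \<Rightarrow> 'a) \<Rightarrow> nat \<Rightarrow> real" where
  "kDTW k v m1 w m2 = Min (topk_cost k v w ` {T. is_traversal m1 m2 T})"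

definition num_dist :: "(nat \<Rightarrow> 'a::real_normed_vector) \<Rightarrow> nat \<Rightarrow> (nat \<Rightarrow> 'a) \<Rightarrow> nat \<Rightarrow> nat" where
  "num_dist v m1 w m2 = card {norm (v i - w j) | i j. i \<in> {1..m1} \<and> j \<in> {1..m2}}"

text \<open>Every computation returns a pair (result, number of unit-cost operations).
  Unit-cost operations: each vertex-to-vertex distance computation and each arithmetic
  operation / comparison (including min, max).\<close>

fun map_c :: "('a \<Rightarrow> 'b \<times> nat) \<Rightarrow> 'a list \<Rightarrow> 'b list \<times> nat" where
  "map_c f [] = ([], 0)"
| "map_c f (x # xs) = (let (y, c1) = f x; (ys, c2) = map_c f xs in (y # ys, c1 + c2))"

definition dist_matrix :: "(nat \<Rightarrow> 'a::real_normed_vector) \<Rightarrow> nat \<Rightarrow> (nat \<Rightarrow> 'a) \<Rightarrow> nat \<Rightarrow> real list list \<times> nat" where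
  "dist_matrix v m1 w m2 =
     map_c (\<lambda>i. map_c (\<lambda>j. (norm (v i - w j), 1)) [1..<m2 + 1]) [1..<m1 + 1]"

fun ins_desc :: "real \<Rightarrow> real list \<Rightarrow> real list \<times> nat" where
  "ins_desc x [] = ([x], 0)"
| "ins_desc x (y # ys) =
     (if x = y then (y # ys, 1)
      else if y < x then (x # y # ys, 2)
      else (let (r, c) = ins_desc x ys in (y # r, c + 2)))"

fun ins_all :: "real list \<Rightarrow> real list \<Rightarrow> real list \<times> nat" where
  "ins_all [] acc = (acc, 0)"
| "ins_all (x # xs) acc = (let (acc', c1) = ins_desc x acc; (r, c2) = ins_all xs acc' in (r, c1 + c2))"

definition thresholds :: "real list list \<Rightarrow> real list \<times> nat" where
  "thresholds D = (let (E, c) = ins_all (concat D) [] in (E @ [0], c))"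

definition shifted :: "real \<Rightarrow> real list list \<Rightarrow> real list list \<times> nat" where
  "shifted e D = map_c (\<lambda>row. map_c (\<lambda>x. (max (x - e) 0, 2)) row) D"

text \<open>Dynamic programme for DTW, row by row.
  C[1,1] = D'[1,1], C[1,j] = C[1,j-1] + D'[1,j], C[i,1] = C[i-1,1] + D'[i,1],
  C[i,j] = D'[i,j] + min (min C[i-1,j-1] C[i-1,j]) C[i,j-1].\<close>

fun first_row_aux :: "real \<Rightarrow> real list \<Rightarrow> real list \<times> nat" where
  "first_row_aux acc [] = ([], 0)"
| "first_row_aux acc (x # xs) = (let c = acc + x; (r, t) = first_row_aux c xs in (c # r, t + 1))"

fun first_row :: "real list \<Rightarrow> real list \<times> nat" where
  "first_row [] = ([], 0)"
| "first_row (x # xs) = (let (r, t) = first_row_aux x xs in (x # r, t))"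

fun row_aux :: "real \<Rightarrow> real \<Rightarrow> real list \<Rightarrow> real list \<Rightarrow> real list \<times> nat" where
  "row_aux left diag (p # ps) (x # xs) =
     (let c = x + min (min diag p) left; (r, t) = row_aux c p ps xs in (c # r, t + 3))"
| "row_aux left diag _ _ = ([], 0)"

fun next_row :: "real list \<Rightarrow> real list \<Rightarrow> real list \<times> nat" where
  "next_row (p # ps) (x # xs) = (let c = p + x; (r, t) = row_aux c p ps xs in (c # r, t + 1))"
| "next_row _ _ = ([], 0)"

fun dp_rows :: "real list \<Rightarrow> real list list \<Rightarrow> real list \<times> nat" where
  "dp_rows prev [] = (prev, 0)"
| "dp_rows prev (r # rs) = (let (nr, c1) = next_row prev r; (res, c2) = dp_rows nr rs in (res, c1 + c2))"

fun dtw_dp :: "real list list \<Rightarrow> real \<times> nat" where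
  "dtw_dp [] = (0, 0)"
| "dtw_dp (r # rs) = (let (fr, c1) = first_row r; (lr, c2) = dp_rows fr rs in (last lr, c1 + c2))"

text \<open>Main loop over l = 1..z+1: mincost := min mincost (DTW(D') + k * E[l]).
  Costs: building D', the DP, one multiplication, one addition and one min.\<close>
fun main_loop :: "nat \<Rightarrow> real list list \<Rightarrow> real list \<Rightarrow> ereal \<Rightarrow> ereal \<times> nat" where
  "main_loop k D [] mincost = (mincost, 0)"
| "main_loop k D (e # es) mincost =
     (let (D', c1) = shifted e D;
          (d, c2) = dtw_dp D';
          mincost' = min mincost (ereal (d + real k * e));
          (res, c3) = main_loop k D es mincost'
      in (res, c1 + c2 + 3 + c3))"

definition kDTW_alg :: "nat \<Rightarrow> (nat \<Rightarrow> 'a::real_normed_vector) \<Rightarrow> nat \<Rightarrow> (nat \<Rightarrow> 'a) \<Rightarrow> nat \<Rightarrow> ereal \<times> nat" where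
  "kDTW_alg k v m1 w m2 =
     (let (D, c1) = dist_matrix v m1 w m2;
          (E, c2) = thresholds D;
          (res, c3) = main_loop k D E \<infinity>
      in (res, c1 + c2 + c3))"

end

theory Submission
  imports Defs
begin

text \<open>For nonnegative reals x_1 \<ge> ... \<ge> x_n and every t \<ge> 0, the sum of the k largest
  entries is at most k t + \<Sum>_i max (x_i - t) 0, with equality for t = x_(k+1)
  (for t = 0 if n \<le> k). Hence the k-DTW distance is the minimum, over thresholds
  t \<in> {0} \<union> {\<parallel>v_i - w_j\<parallel>} and traversals T, of k t + \<Sum>_(i,j)\<in>T max (\<parallel>v_i - w_j\<parallel> - t) 0.
  Exchanging the two minima, the inner one is the DTW of the truncated distance matrix, computed
  by the usual dynamic programme in O(m' m'') steps. Inserting the m' m'' distances into a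
  strictly decreasing list that never has more than z entries costs O(m' m'' z) comparisons.\<close>

section \<open>Sums of the largest entries\<close>

lemma sum_list_take_le_threshold:
  fixes ys :: "'a::linordered_idom list"
  assumes "0 \<le> t"
  shows "sum_list (take k ys) \<le> of_nat k * t + (\<Sum>y\<leftarrow>ys. max (y - t) 0)"
proof (induction ys arbitrary: k)
  case Nil
  show ?case using assms by simp
next
  case (Cons y ys)
  show ?case
  proof (cases k)
    case 0
    have "0 \<le> (\<Sum>x\<leftarrow>y # ys. max (x - t) 0)" by (rule sum_list_nonneg) auto
    then show ?thesis using 0 by simp
  next
    case (Suc k')
    have "y \<le> t + max (y - t) 0" by simp
    then show ?thesis using Cons.IH[of k'] Suc by (simp add: algebra_simps)
  qed
qed

lemma sum_list_take_eq_threshold: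
  fixes ys :: "'a::linordered_idom list"
  assumes "sorted_wrt (\<ge>) ys" and "\<forall>y\<in>set ys. 0 \<le> y"
  shows "\<exists>t\<in>insert 0 (set ys). sum_list (take k ys) = of_nat k * t + (\<Sum>y\<leftarrow>ys. max (y - t) 0)"
  using assms
proof (induction ys arbitrary: k)
  case Nil
  show ?case by simp
next
  case (Cons y ys)
  show ?case
  proof (cases k)
    case 0
    have "map (\<lambda>x. max (x - y) 0) (y # ys) = map (\<lambda>_. 0) (y # ys)"
      using Cons.prems(1) by (intro map_cong) auto
    then have "(\<Sum>x\<leftarrow>y # ys. max (x - y) 0) = 0"
      by (simp only:) (simp add: map_replicate_const sum_list_replicate)
    then show ?thesis using 0 by auto
  next
    case (Suc k')
    have "sorted_wrt (\<ge>) ys" "\<forall>x\<in>set ys. 0 \<le> x" using Cons.prems by auto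
    then obtain t where t: "t \<in> insert 0 (set ys)"
      "sum_list (take k' ys) = of_nat k' * t + (\<Sum>x\<leftarrow>ys. max (x - t) 0)"
      using Cons.IH by blast
    have "t \<le> y" using t(1) Cons.prems by auto
    then show ?thesis using t Suc by (intro bexI[of _ t]) (auto simp: algebra_simps)
  qed
qed

lemma sum_list_map_rev_sort:
  fixes f :: "'a::linorder \<Rightarrow> 'b::comm_monoid_add"
  shows "(\<Sum>x\<leftarrow>rev (sort xs). f x) = (\<Sum>x\<leftarrow>xs. f x)"
  by (metis mset_map mset_rev mset_sort sum_mset_sum_list)

lemma sorted_wrt_greater_distinct: "sorted_wrt (>) (xs :: 'a::linorder list) \<Longrightarrow> distinct xs"
  by (induction xs) auto

section \<open>Traversals and DTW\<close>

definition path_cost :: "(nat \<Rightarrow> nat \<Rightarrow> real) \<Rightarrow> (nat \<times> nat) list \<Rightarrow> real" where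
  "path_cost M T = (\<Sum>(i, j)\<leftarrow>T. M i j)"

definition truncate :: "real \<Rightarrow> (nat \<Rightarrow> nat \<Rightarrow> real) \<Rightarrow> nat \<Rightarrow> nat \<Rightarrow> real" where
  "truncate e M i j = max (M i j - e) 0"

lemma path_cost_snoc: "path_cost M (T @ [(i, j)]) = path_cost M T + M i j"
  by (simp add: path_cost_def)

lemma path_cost_truncate: "path_cost (truncate e M) T = (\<Sum>x\<leftarrow>map (\<lambda>(i, j). M i j) T. max (x - e) 0)"
  by (induction T) (auto simp: path_cost_def truncate_def)

lemma DTW_eq_Min_path_cost: "DTW m1 m2 M = Min (path_cost M ` {T. is_traversal m1 m2 T})"
  by (simp add: DTW_def path_cost_def[abs_def])

lemma traversal_nth_mono:
  assumes "is_traversal m1 m2 T" and "a \<le> b" and "b < length T"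
  shows "fst (T ! a) \<le> fst (T ! b) \<and> snd (T ! a) \<le> snd (T ! b) \<and>
    fst (T ! a) + snd (T ! a) + (b - a) \<le> fst (T ! b) + snd (T ! b)"
  using assms(2,3)
proof (induction b)
  case 0
  then show ?case by simp
next
  case (Suc b)
  show ?case
  proof (cases "a = Suc b")
    case False
    then have "a \<le> b" using Suc.prems by simp
    moreover have "trav_step (T ! b) (T ! Suc b)"
      using assms(1) Suc.prems unfolding is_traversal_def by blast
    ultimately show ?thesis using Suc unfolding trav_step_def by auto
  qed simp
qed

lemma traversal_set_subset:
  assumes "is_traversal m1 m2 T"
  shows "set T \<subseteq> {1..m1} \<times> {1..m2}"
proof
  fix x assume "x \<in> set T"
  then obtain a where a: "a < length T" "x = T ! a" by (auto simp: in_set_conv_nth)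
  have "T ! 0 = (1, 1)" "T ! (length T - 1) = (m1, m2)"
    using assms unfolding is_traversal_def by (auto simp: hd_conv_nth last_conv_nth)
  then show "x \<in> {1..m1} \<times> {1..m2}"
    using traversal_nth_mono[OF assms, of 0 a] traversal_nth_mono[OF assms, of a "length T - 1"] a
    by (auto simp: mem_Times_iff)
qed

lemma traversal_length_less:
  assumes "is_traversal m1 m2 T"
  shows "length T < m1 + m2"
proof -
  have "T \<noteq> []" "T ! 0 = (1, 1)" "T ! (length T - 1) = (m1, m2)"
    using assms unfolding is_traversal_def by (auto simp: hd_conv_nth last_conv_nth)
  then show ?thesis using traversal_nth_mono[OF assms, of 0 "length T - 1"] by simp
qed

lemma traversal_end_pos:
  assumes "is_traversal m1 m2 T"
  shows "1 \<le> m1" "1 \<le> m2"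
proof -
  have "(m1, m2) \<in> set T" using assms unfolding is_traversal_def by (metis last_in_set)
  then show "1 \<le> m1" "1 \<le> m2" using traversal_set_subset[OF assms] by auto
qed

lemma finite_traversals: "finite {T. is_traversal m1 m2 T}"
proof (rule finite_subset)
  show "{T. is_traversal m1 m2 T} \<subseteq> {T. set T \<subseteq> {1..m1} \<times> {1..m2} \<and> length T \<le> m1 + m2}"
    using traversal_set_subset traversal_length_less by fastforce
  show "finite {T. set T \<subseteq> {1..m1} \<times> {1..m2} \<and> length T \<le> m1 + m2}"
    by (rule finite_lists_length_le) simp
qed

lemma traversal_snoc:
  assumes "is_traversal i' j' T" and "trav_step (i', j') (i, j)"
  shows "is_traversal i j (T @ [(i, j)])"
proof -
  have "trav_step ((T @ [(i, j)]) ! n) ((T @ [(i, j)]) ! Suc n)" if "Suc n < length (T @ [(i, j)])" for n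
  proof (cases "Suc n < length T")
    case True
    then show ?thesis using assms(1) unfolding is_traversal_def by (simp add: nth_append)
  next
    case False
    then have "n = length T - 1" using that by simp
    moreover have "T ! (length T - 1) = (i', j')"
      using assms(1) unfolding is_traversal_def by (metis last_conv_nth)
    ultimately show ?thesis using assms unfolding is_traversal_def by (simp add: nth_append)
  qed
  then show ?thesis using assms(1) unfolding is_traversal_def by auto
qed

lemma traversal_cases:
  assumes "is_traversal i j T"
  obtains "T = [(1, 1)]" "i = 1" "j = 1"
  | T' i' j' where "T = T' @ [(i, j)]" "is_traversal i' j' T'" "trav_step (i', j') (i, j)"
proof (cases "length T < 2")
  case True
  then obtain x where "T = [x]"
    using assms unfolding is_traversal_def by (cases T) (auto simp: Suc_less_eq2)
  then show ?thesis using that(1) assms unfolding is_traversal_def by auto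
next
  case False
  define T' where "T' = butlast T"
  have T: "T = T' @ [(i, j)]"
    using assms unfolding is_traversal_def T'_def by (metis append_butlast_last_id)
  have T'_ne: "T' \<noteq> []" using False by (simp add: T'_def flip: length_0_conv)
  have steps: "trav_step (T ! n) (T ! Suc n)" if "Suc n < length T" for n
    using assms that unfolding is_traversal_def by blast
  have "hd T' = hd T"
    using T'_ne by (subst T) simp
  then have "is_traversal (fst (last T')) (snd (last T')) T'"
    using assms T'_ne steps unfolding is_traversal_def T'_def by (auto simp: nth_butlast)
  moreover have "trav_step (last T') (i, j)"
    using steps[of "length T' - 1"] T'_ne by (simp add: T nth_append last_conv_nth)
  ultimately show ?thesis using that(2) T by (metis prod.collapse)
qed

text \<open>The entries C[i,j] of the dynamic programme; indices are 1-based, row and column 0 are junk.\<close>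

fun dtw_table :: "(nat \<Rightarrow> nat \<Rightarrow> real) \<Rightarrow> nat \<Rightarrow> nat \<Rightarrow> real" where
  "dtw_table M 0 j = 0"
| "dtw_table M i 0 = 0"
| "dtw_table M (Suc 0) (Suc 0) = M 1 1"
| "dtw_table M (Suc 0) (Suc (Suc j)) = dtw_table M 1 (Suc j) + M 1 (Suc (Suc j))"
| "dtw_table M (Suc (Suc i)) (Suc 0) = dtw_table M (Suc i) 1 + M (Suc (Suc i)) 1"
| "dtw_table M (Suc (Suc i)) (Suc (Suc j)) = M (Suc (Suc i)) (Suc (Suc j)) +
     min (min (dtw_table M (Suc i) (Suc j)) (dtw_table M (Suc i) (Suc (Suc j))))
       (dtw_table M (Suc (Suc i)) (Suc j))"

lemma dtw_table_first_row: "1 \<le> j \<Longrightarrow> dtw_table M 1 (Suc j) = dtw_table M 1 j + M 1 (Suc j)"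
  by (cases j) auto

lemma dtw_table_first_col: "1 \<le> i \<Longrightarrow> dtw_table M (Suc i) 1 = dtw_table M i 1 + M (Suc i) 1"
  by (cases i) auto

lemma dtw_table_inner:
  "1 \<le> i \<Longrightarrow> 1 \<le> j \<Longrightarrow> dtw_table M (Suc i) (Suc j) =
     M (Suc i) (Suc j) + min (min (dtw_table M i j) (dtw_table M i (Suc j))) (dtw_table M (Suc i) j)"
  by (cases i; cases j) auto

lemma dtw_table_step:
  assumes "trav_step (i', j') (i, j)" and "1 \<le> i'" and "1 \<le> j'"
  shows "dtw_table M i j \<le> dtw_table M i' j' + M i j"
proof -
  have "(i, j) = (Suc i', j') \<or> (i, j) = (i', Suc j') \<or> (i, j) = (Suc i', Suc j')"
    using assms(1) unfolding trav_step_def by auto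
  moreover have "dtw_table M (Suc i') j' \<le> dtw_table M i' j' + M (Suc i') j'"
    using dtw_table_first_col[OF assms(2)] dtw_table_inner[OF assms(2), of "j' - 1" M] assms(3)
    by (cases "j' = 1") auto
  moreover have "dtw_table M i' (Suc j') \<le> dtw_table M i' j' + M i' (Suc j')"
    using dtw_table_first_row[OF assms(3)] dtw_table_inner[OF _ assms(3), of "i' - 1" M] assms(2)
    by (cases "i' = 1") auto
  moreover have "dtw_table M (Suc i') (Suc j') \<le> dtw_table M i' j' + M (Suc i') (Suc j')"
    using dtw_table_inner[OF assms(2,3)] by simp
  ultimately show ?thesis by auto
qed

lemma dtw_table_le_path_cost: "is_traversal i j T \<Longrightarrow> dtw_table M i j \<le> path_cost M T"
proof (induction "length T" arbitrary: T i j rule: less_induct)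
  case less
  from less.prems show ?case
  proof (cases rule: traversal_cases)
    case 1
    then show ?thesis by (simp add: path_cost_def)
  next
    case (2 T' i' j')
    have "dtw_table M i' j' \<le> path_cost M T'" using less.hyps 2 by simp
    moreover have "dtw_table M i j \<le> dtw_table M i' j' + M i j"
      using dtw_table_step 2 traversal_end_pos by blast
    ultimately show ?thesis using 2 by (simp add: path_cost_snoc)
  qed
qed

lemma dtw_table_attained:
  "1 \<le> i \<Longrightarrow> 1 \<le> j \<Longrightarrow> \<exists>T. is_traversal i j T \<and> path_cost M T = dtw_table M i j"
proof (induction M i j rule: dtw_table.induct)
  case (3 M)
  have "is_traversal 1 1 [(1, 1)]" unfolding is_traversal_def by simp
  then show ?case by (auto simp: path_cost_def)
next
  case (4 M j)
  then obtain T where "is_traversal 1 (Suc j) T" "path_cost M T = dtw_table M 1 (Suc j)" by auto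
  moreover have "trav_step (1, Suc j) (1, Suc (Suc j))" by (simp add: trav_step_def)
  ultimately show ?case by (auto intro!: traversal_snoc simp: path_cost_snoc)
next
  case (5 M i)
  then obtain T where "is_traversal (Suc i) 1 T" "path_cost M T = dtw_table M (Suc i) 1" by auto
  moreover have "trav_step (Suc i, 1) (Suc (Suc i), 1)" by (simp add: trav_step_def)
  ultimately show ?case by (auto intro!: traversal_snoc simp: path_cost_snoc)
next
  case (6 M i j)
  let ?i = "Suc (Suc i)" and ?j = "Suc (Suc j)"
  let ?preds = "{(Suc i, Suc j), (Suc i, ?j), (?i, Suc j)}"
  obtain i' j' where p: "(i', j') \<in> ?preds" "dtw_table M ?i ?j = dtw_table M i' j' + M ?i ?j"
    by (cases "dtw_table M (Suc i) (Suc j) \<le> dtw_table M (Suc i) ?j";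
        cases "dtw_table M (Suc i) (Suc j) \<le> dtw_table M ?i (Suc j)";
        cases "dtw_table M (Suc i) ?j \<le> dtw_table M ?i (Suc j)") (auto simp: min_def)
  then obtain T where "is_traversal i' j' T" "path_cost M T = dtw_table M i' j'"
    using "6.IH" by auto
  moreover have "trav_step (i', j') (?i, ?j)" using p(1) by (auto simp: trav_step_def)
  ultimately show ?case using p(2) by (auto intro!: traversal_snoc simp: path_cost_snoc)
qed simp_all

lemma Min_traversals_le:
  "is_traversal m1 m2 T \<Longrightarrow> Min (f ` {T. is_traversal m1 m2 T}) \<le> f T"
  using finite_traversals by (intro Min_le) auto

lemma Min_traversals_attained:
  fixes f :: "(nat \<times> nat) list \<Rightarrow> 'a::linorder"
  assumes "1 \<le> m1" and "1 \<le> m2"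
  obtains T where "is_traversal m1 m2 T" "Min (f ` {T. is_traversal m1 m2 T}) = f T"
proof -
  obtain T where "is_traversal m1 m2 T" using dtw_table_attained assms by blast
  then have "Min (f ` {T. is_traversal m1 m2 T}) \<in> f ` {T. is_traversal m1 m2 T}"
    using finite_traversals by (intro Min_in) auto
  then show ?thesis using that by auto
qed

lemma DTW_eq_dtw_table:
  assumes "1 \<le> m1" and "1 \<le> m2"
  shows "DTW m1 m2 M = dtw_table M m1 m2"
proof (rule antisym)
  obtain T where "is_traversal m1 m2 T" "path_cost M T = dtw_table M m1 m2"
    using dtw_table_attained assms by blast
  then show "DTW m1 m2 M \<le> dtw_table M m1 m2"
    unfolding DTW_eq_Min_path_cost by (metis Min_traversals_le)
  obtain T' where "is_traversal m1 m2 T'" "DTW m1 m2 M = path_cost M T'"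
    using Min_traversals_attained[OF assms] unfolding DTW_eq_Min_path_cost by blast
  then show "dtw_table M m1 m2 \<le> DTW m1 m2 M" using dtw_table_le_path_cost by simp
qed

section \<open>k-DTW as a minimum of truncated DTW values\<close>

lemma topk_cost_le_truncated:
  assumes "0 \<le> e"
  shows "topk_cost k v w T \<le> real k * e + path_cost (truncate e (\<lambda>i j. norm (v i - w j))) T"
  using sum_list_take_le_threshold[OF assms, of k "rev (sort (map (\<lambda>(i, j). norm (v i - w j)) T))"]
  unfolding topk_cost_def path_cost_truncate sum_list_map_rev_sort by simp

lemma topk_cost_eq_truncated:
  "\<exists>e\<in>insert 0 ((\<lambda>(i, j). norm (v i - w j)) ` set T).
     topk_cost k v w T = real k * e + path_cost (truncate e (\<lambda>i j. norm (v i - w j))) T"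
proof -
  define xs where "xs = map (\<lambda>(i, j). norm (v i - w j)) T"
  have "sorted_wrt (\<ge>) (rev (sort xs))" by (simp add: sorted_wrt_rev)
  moreover have "\<forall>x\<in>set (rev (sort xs)). 0 \<le> x" by (auto simp: xs_def)
  ultimately obtain e where e: "e \<in> insert 0 (set (rev (sort xs)))"
    "sum_list (take k (rev (sort xs))) = real k * e + (\<Sum>x\<leftarrow>rev (sort xs). max (x - e) 0)"
    using sum_list_take_eq_threshold by blast
  then show ?thesis
    unfolding topk_cost_def path_cost_truncate
    by (intro bexI[of _ e]) (auto simp: xs_def sum_list_map_rev_sort)
qed

context
  fixes v w :: "nat \<Rightarrow> 'a::real_normed_vector" and m1 m2 :: nat
  assumes m1: "1 \<le> m1" and m2: "1 \<le> m2"
begin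

abbreviation dists :: "real set" where
  "dists \<equiv> {norm (v i - w j) | i j. i \<in> {1..m1} \<and> j \<in> {1..m2}}"

abbreviation dist_mat :: "nat \<Rightarrow> nat \<Rightarrow> real" where
  "dist_mat \<equiv> \<lambda>i j. norm (v i - w j)"

lemma kDTW_le_truncated_DTW:
  assumes "0 \<le> e"
  shows "kDTW k v m1 w m2 \<le> DTW m1 m2 (truncate e dist_mat) + real k * e"
proof -
  obtain T where T: "is_traversal m1 m2 T"
    "DTW m1 m2 (truncate e dist_mat) = path_cost (truncate e dist_mat) T"
    using Min_traversals_attained[OF m1 m2] unfolding DTW_eq_Min_path_cost by blast
  have "kDTW k v m1 w m2 \<le> topk_cost k v w T"
    unfolding kDTW_def using T(1) by (rule Min_traversals_le)
  also have "\<dots> \<le> real k * e + path_cost (truncate e dist_mat) T"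
    using assms by (rule topk_cost_le_truncated)
  finally show ?thesis using T(2) by simp
qed

lemma truncated_DTW_le_kDTW:
  obtains e where "e \<in> insert 0 dists"
    "DTW m1 m2 (truncate e dist_mat) + real k * e \<le> kDTW k v m1 w m2"
proof -
  obtain T where T: "is_traversal m1 m2 T" "kDTW k v m1 w m2 = topk_cost k v w T"
    using Min_traversals_attained[OF m1 m2] unfolding kDTW_def by blast
  obtain e where e: "e \<in> insert 0 ((\<lambda>(i, j). norm (v i - w j)) ` set T)"
    "topk_cost k v w T = real k * e + path_cost (truncate e dist_mat) T"
    using topk_cost_eq_truncated by blast
  have "e \<in> insert 0 dists"
    using e(1) traversal_set_subset[OF T(1)] by fastforce
  moreover have "DTW m1 m2 (truncate e dist_mat)
      \<le> path_cost (truncate e dist_mat) T"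
    unfolding DTW_eq_Min_path_cost using T(1) by (rule Min_traversals_le)
  ultimately show ?thesis using that T(2) e(2) by simp
qed

lemma INF_truncated_DTW_eq_kDTW:
  "(INF e\<in>insert 0 dists.
      ereal (DTW m1 m2 (truncate e dist_mat) + real k * e)) = ereal (kDTW k v m1 w m2)"
proof (rule antisym)
  obtain e where "e \<in> insert 0 dists"
    "DTW m1 m2 (truncate e dist_mat) + real k * e \<le> kDTW k v m1 w m2"
    using truncated_DTW_le_kDTW by blast
  then show "(INF e\<in>insert 0 dists.
      ereal (DTW m1 m2 (truncate e dist_mat) + real k * e)) \<le> ereal (kDTW k v m1 w m2)"
    by (meson INF_lower ereal_less_eq(3) order_trans)
  show "ereal (kDTW k v m1 w m2) \<le> (INF e\<in>insert 0 dists.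
      ereal (DTW m1 m2 (truncate e dist_mat) + real k * e))"
    using kDTW_le_truncated_DTW by (intro INF_greatest) auto
qed

end

section \<open>The algorithm\<close>

definition matrix_rows :: "(nat \<Rightarrow> nat \<Rightarrow> 'b) \<Rightarrow> nat \<Rightarrow> nat \<Rightarrow> 'b list list" where
  "matrix_rows M m n = map (\<lambda>i. map (M i) [1..<n + 1]) [1..<m + 1]"

lemma set_concat_matrix_rows:
  "set (concat (matrix_rows M m n)) = {M i j | i j. i \<in> {1..m} \<and> j \<in> {1..n}}"
proof -
  have "set (concat (matrix_rows M m n)) = (\<Union>i\<in>{1..m}. M i ` {1..n})"
    by (simp add: matrix_rows_def atLeastLessThanSuc_atLeastAtMost del: upt_Suc)
  then show ?thesis by blast
qed

lemma length_concat_matrix_rows: "length (concat (matrix_rows M m n)) = m * n"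
  by (simp add: matrix_rows_def length_concat o_def sum_list_triv)

lemma map_c_eq: "map_c f xs = (map (fst \<circ> f) xs, \<Sum>x\<leftarrow>xs. snd (f x))"
  by (induction xs) (auto split: prod.splits)

lemma dist_matrix_eq:
  "dist_matrix v m1 w m2 = (matrix_rows (\<lambda>i j. norm (v i - w j)) m1 m2, m1 * m2)"
  by (simp add: dist_matrix_def matrix_rows_def map_c_eq o_def sum_list_triv)

lemma shifted_matrix_rows:
  "shifted e (matrix_rows M m n) = (matrix_rows (truncate e M) m n, 2 * (m * n))"
  by (simp add: shifted_def matrix_rows_def truncate_def map_c_eq o_def sum_list_triv)

lemma first_row_aux_eq:
  "1 \<le> j \<Longrightarrow> first_row_aux (dtw_table M 1 j) (map (M 1) [Suc j..<n]) =
     (map (dtw_table M 1) [Suc j..<n], n - Suc j)"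
proof (induction "n - Suc j" arbitrary: j)
  case (Suc d)
  then have "Suc j < n" by simp
  moreover have "first_row_aux (dtw_table M 1 (Suc j)) (map (M 1) [Suc (Suc j)..<n]) =
      (map (dtw_table M 1) [Suc (Suc j)..<n], n - Suc (Suc j))"
    using Suc by simp
  ultimately show ?case using dtw_table_first_row[OF Suc.prems, of M] by (simp add: upt_conv_Cons)
qed simp

lemma first_row_eq:
  assumes "1 \<le> n"
  shows "first_row (map (M 1) [1..<n + 1]) = (map (dtw_table M 1) [1..<n + 1], n - 1)"
proof -
  have "[1..<n + 1] = 1 # [Suc 1..<n + 1]" using assms by (simp add: upt_conv_Cons)
  moreover have "first_row_aux (dtw_table M 1 1) (map (M 1) [Suc 1..<n + 1]) =
      (map (dtw_table M 1) [Suc 1..<n + 1], n + 1 - Suc 1)"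
    by (rule first_row_aux_eq) simp
  ultimately show ?thesis by simp
qed

lemma row_aux_eq:
  "1 \<le> i \<Longrightarrow> 1 \<le> j \<Longrightarrow>
   row_aux (dtw_table M (Suc i) j) (dtw_table M i j)
     (map (dtw_table M i) [Suc j..<n]) (map (M (Suc i)) [Suc j..<n]) =
   (map (dtw_table M (Suc i)) [Suc j..<n], 3 * (n - Suc j))"
proof (induction "n - Suc j" arbitrary: j)
  case (Suc d)
  then have "Suc j < n" by simp
  moreover have "row_aux (dtw_table M (Suc i) (Suc j)) (dtw_table M i (Suc j))
      (map (dtw_table M i) [Suc (Suc j)..<n]) (map (M (Suc i)) [Suc (Suc j)..<n])
      = (map (dtw_table M (Suc i)) [Suc (Suc j)..<n], 3 * (n - Suc (Suc j)))"
    using Suc by simp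
  ultimately show ?case using dtw_table_inner[OF Suc.prems, of M]
    by (simp add: upt_conv_Cons min.commute min.left_commute add.commute)
qed simp

lemma next_row_eq:
  assumes "1 \<le> i" and "1 \<le> n"
  shows "next_row (map (dtw_table M i) [1..<n + 1]) (map (M (Suc i)) [1..<n + 1])
     = (map (dtw_table M (Suc i)) [1..<n + 1], 3 * (n - 1) + 1)"
proof -
  have "[1..<n + 1] = 1 # [Suc 1..<n + 1]" using assms by (simp add: upt_conv_Cons)
  moreover have "row_aux (dtw_table M (Suc i) 1) (dtw_table M i 1) (map (dtw_table M i) [Suc 1..<n + 1])
      (map (M (Suc i)) [Suc 1..<n + 1]) = (map (dtw_table M (Suc i)) [Suc 1..<n + 1], 3 * (n + 1 - Suc 1))"
    by (rule row_aux_eq) (use assms in auto)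
  ultimately show ?thesis using dtw_table_first_col[OF assms(1), of M] by (simp add: add.commute)
qed

lemma dp_rows_eq:
  "1 \<le> i \<Longrightarrow> i \<le> m \<Longrightarrow> 1 \<le> n \<Longrightarrow>
   dp_rows (map (dtw_table M i) [1..<n + 1]) (map (\<lambda>i'. map (M i') [1..<n + 1]) [Suc i..<m + 1])
     = (map (dtw_table M m) [1..<n + 1], (m - i) * (3 * (n - 1) + 1))"
proof (induction "m - i" arbitrary: i)
  case (Suc d)
  then have "[Suc i..<m + 1] = Suc i # [Suc (Suc i)..<m + 1]" by (simp only: upt_conv_Cons)
  moreover have "(m - i) * (3 * (n - 1) + 1) = (3 * (n - 1) + 1) + (m - Suc i) * (3 * (n - 1) + 1)"
    using Suc.hyps(2) by (metis Suc_diff_Suc diff_Suc_1 mult_Suc zero_less_Suc zero_less_diff)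
  moreover have "dp_rows (map (dtw_table M (Suc i)) [1..<n + 1])
      (map (\<lambda>i'. map (M i') [1..<n + 1]) [Suc (Suc i)..<m + 1]) =
    (map (dtw_table M m) [1..<n + 1], (m - Suc i) * (3 * (n - 1) + 1))"
    using Suc by simp
  ultimately show ?case using next_row_eq[of i n M] Suc.prems by (simp only: list.map(2) dp_rows.simps) simp
qed simp

definition dtw_dp_ops :: "nat \<Rightarrow> nat \<Rightarrow> nat" where
  "dtw_dp_ops m n = (n - 1) + (m - 1) * (3 * (n - 1) + 1)"

lemma dtw_dp_ops_le:
  assumes "1 \<le> m" and "1 \<le> n"
  shows "dtw_dp_ops m n \<le> 3 * (m * n)"
proof -
  have "(m - 1) * (3 * (n - 1) + 1) \<le> (m - 1) * (3 * n)"
    using assms(2) by (intro mult_le_mono2) arith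
  moreover have "(n - 1) + (m - 1) * (3 * n) \<le> 3 * (m * n)" using assms(1) by (cases m) auto
  ultimately show ?thesis unfolding dtw_dp_ops_def by linarith
qed

lemma dtw_dp_matrix_rows:
  assumes "1 \<le> m" and "1 \<le> n"
  shows "dtw_dp (matrix_rows M m n) = (DTW m n M, dtw_dp_ops m n)"
proof -
  have "[1..<m + 1] = 1 # [Suc 1..<m + 1]" using assms by (simp add: upt_conv_Cons)
  moreover have "last (map (dtw_table M m) [1..<n + 1]) = dtw_table M m n"
    using assms by (simp add: last_map)
  ultimately show ?thesis
    using first_row_eq[of n M] dp_rows_eq[of 1 m n M] DTW_eq_dtw_table[OF assms] assms
    by (simp add: matrix_rows_def dtw_dp_ops_def)
qed

lemma ins_desc_correct:
  assumes "sorted_wrt (>) acc" and "ins_desc x acc = (r, c)"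
  shows "sorted_wrt (>) r \<and> set r = insert x (set acc) \<and> c \<le> 2 * length acc"
  using assms
proof (induction acc arbitrary: r c)
  case (Cons y ys)
  consider "x = y" | "y < x" | "x < y" by linarith
  then show ?case
  proof cases
    case 3
    obtain r' c' where rc: "ins_desc x ys = (r', c')" by fastforce
    have "sorted_wrt (>) r' \<and> set r' = insert x (set ys) \<and> c' \<le> 2 * length ys"
      using Cons.IH[OF _ rc] Cons.prems(1) by simp
    moreover have "r = y # r'" "c = c' + 2" using Cons.prems(2) 3 rc by auto
    ultimately show ?thesis using Cons.prems(1) 3 by auto
  next
    case 2
    have "\<forall>z\<in>set ys. z < x" using Cons.prems(1) by (auto dest: order.strict_trans[OF _ 2])
    then show ?thesis using Cons.prems 2 by auto
  qed (use Cons.prems in auto)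
qed simp

lemma ins_all_correct:
  assumes "sorted_wrt (>) acc" and "ins_all xs acc = (r, c)"
  shows "sorted_wrt (>) r \<and> set r = set acc \<union> set xs \<and>
    c \<le> 2 * length xs * card (set acc \<union> set xs)"
  using assms
proof (induction xs arbitrary: acc r c)
  case (Cons x xs)
  obtain acc' c1 where ins: "ins_desc x acc = (acc', c1)" by fastforce
  obtain c2 where rec: "ins_all xs acc' = (r, c2)" "c = c1 + c2"
    using Cons.prems(2) ins by (auto split: prod.splits)
  have acc': "sorted_wrt (>) acc'" "set acc' = insert x (set acc)" "c1 \<le> 2 * length acc"
    using ins_desc_correct[OF Cons.prems(1) ins] by auto
  have "length acc = card (set acc)"
    using sorted_wrt_greater_distinct[OF Cons.prems(1)] by (simp add: distinct_card)
  also have "\<dots> \<le> card (set acc \<union> set (x # xs))" by (intro card_mono) auto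
  finally show ?case using Cons.IH[OF acc'(1) rec(1)] acc' rec(2) by auto
qed simp

lemma thresholds_correct:
  obtains E c where "thresholds D = (E @ [0], c)" "distinct E" "set E = set (concat D)"
    "c \<le> 2 * length (concat D) * card (set (concat D))"
proof -
  obtain E c where Ec: "ins_all (concat D) [] = (E, c)" by fastforce
  then have "sorted_wrt (>) E" "set E = set (concat D)"
    "c \<le> 2 * length (concat D) * card (set (concat D))"
    using ins_all_correct[of "[]" "concat D" E c] by simp_all
  moreover have "thresholds D = (E @ [0], c)" using Ec by (simp add: thresholds_def)
  ultimately show ?thesis using that sorted_wrt_greater_distinct by blast
qed

lemma main_loop_eq:
  assumes "\<And>e. shifted e D = (D' e, cs)" and "\<And>e. dtw_dp (D' e) = (d e, cd)"
  shows "main_loop k D es mc =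
    (min mc (INF e\<in>set es. ereal (d e + real k * e)), length es * (cs + cd + 3))"
proof (induction es arbitrary: mc)
  case (Cons e es)
  then show ?case using assms by (simp add: inf_min min.assoc)
qed simp

lemma num_dist_pos:
  assumes "1 \<le> m1" and "1 \<le> m2"
  shows "1 \<le> num_dist v m1 w m2"
proof -
  let ?S = "{norm (v i - w j) | i j. i \<in> {1..m1} \<and> j \<in> {1..m2}}"
  have "finite ?S" by (rule finite_image_set2) auto
  moreover have "norm (v 1 - w 1) \<in> ?S" using assms by (intro CollectI exI[of _ 1]) auto
  ultimately show ?thesis unfolding num_dist_def by (simp add: Suc_le_eq card_gt_0_iff del: Collect_mem_eq) blast
qed

lemma kDTW_alg_eq:
  fixes v w :: "nat \<Rightarrow> 'a::real_normed_vector"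
  assumes "1 \<le> m1" and "1 \<le> m2"
  obtains c where "kDTW_alg k v m1 w m2 = (ereal (kDTW k v m1 w m2),
      m1 * m2 + c + (num_dist v m1 w m2 + 1) * (2 * (m1 * m2) + dtw_dp_ops m1 m2 + 3))"
    "c \<le> 2 * (m1 * m2) * num_dist v m1 w m2"
proof -
  let ?S = "{norm (v i - w j) | i j. i \<in> {1..m1} \<and> j \<in> {1..m2}}"
  define D where "D = matrix_rows (\<lambda>i j. norm (v i - w j)) m1 m2"
  have setD: "set (concat D) = ?S"
    unfolding D_def by (rule set_concat_matrix_rows)
  have z: "card (set (concat D)) = num_dist v m1 w m2"
    by (simp only: setD num_dist_def)
  obtain E c where E: "thresholds D = (E @ [0], c)" "distinct E" "set E = set (concat D)"
    "c \<le> 2 * length (concat D) * card (set (concat D))"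
    using thresholds_correct by blast
  have "set (E @ [0]) = insert 0 ?S" using E(3) setD by auto
  then have "(INF e\<in>set (E @ [0]). ereal (DTW m1 m2 (truncate e (\<lambda>i j. norm (v i - w j))) + real k * e))
      = ereal (kDTW k v m1 w m2)"
    using INF_truncated_DTW_eq_kDTW[OF assms] by simp
  then have "main_loop k D (E @ [0]) \<infinity> =
      (min \<infinity> (ereal (kDTW k v m1 w m2)), length (E @ [0]) * (2 * (m1 * m2) + dtw_dp_ops m1 m2 + 3))"
    unfolding D_def by (subst main_loop_eq[OF shifted_matrix_rows dtw_dp_matrix_rows[OF assms]]) simp
  moreover have "length E = num_dist v m1 w m2" using E(2,3) z by (metis distinct_card)
  ultimately have "kDTW_alg k v m1 w m2 = (ereal (kDTW k v m1 w m2),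
      m1 * m2 + c + (num_dist v m1 w m2 + 1) * (2 * (m1 * m2) + dtw_dp_ops m1 m2 + 3))"
    using E(1) by (simp add: kDTW_alg_def dist_matrix_eq flip: D_def)
  moreover have "c \<le> 2 * (m1 * m2) * num_dist v m1 w m2"
    using E(4) z by (simp add: D_def length_concat_matrix_rows)
  ultimately show ?thesis using that by blast
qed

lemma fst_kDTW_alg:
  "1 \<le> m1 \<Longrightarrow> 1 \<le> m2 \<Longrightarrow> fst (kDTW_alg k v m1 w m2) = ereal (kDTW k v m1 w m2)"
  by (metis kDTW_alg_eq fst_conv)

lemma snd_kDTW_alg_le:
  assumes m1: "1 \<le> m1" and m2: "1 \<le> m2"
  shows "real (snd (kDTW_alg k v m1 w m2)) \<le> 20 * real m1 * real m2 * real (num_dist v m1 w m2)"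
proof -
  define p z where "p = m1 * m2" and "z = num_dist v m1 w m2"
  obtain c where alg: "snd (kDTW_alg k v m1 w m2) = p + c + (z + 1) * (2 * p + dtw_dp_ops m1 m2 + 3)"
    and c: "c \<le> 2 * (p * z)"
    using kDTW_alg_eq[OF m1 m2] unfolding p_def z_def by (metis mult.assoc snd_conv)
  have "1 \<le> p" "1 \<le> z" using m1 m2 num_dist_pos[OF m1 m2] by (simp_all add: p_def z_def)
  moreover have "dtw_dp_ops m1 m2 \<le> 3 * p" unfolding p_def using m1 m2 by (rule dtw_dp_ops_le)
  ultimately have "(z + 1) * (2 * p + dtw_dp_ops m1 m2 + 3) \<le> (2 * z) * (8 * p)"
    by (intro mult_le_mono) linarith+
  moreover have "(2 * z) * (8 * p) = 16 * (p * z)" by simp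
  moreover have "p \<le> p * z" using \<open>1 \<le> z\<close> by simp
  ultimately have "snd (kDTW_alg k v m1 w m2) \<le> 20 * (p * z)"
    using alg c by linarith
  then show ?thesis
    unfolding p_def z_def by (simp add: mult.assoc flip: of_nat_mult)
qed

theorem theorem3p2:
  "\<exists>C::real. \<forall>(v :: nat \<Rightarrow> 'a::euclidean_space) (w :: nat \<Rightarrow> 'a) (m1::nat) (m2::nat) (k::nat).
     m1 \<ge> 1 \<longrightarrow> m2 \<ge> 1 \<longrightarrow>
       fst (kDTW_alg k v m1 w m2) = ereal (kDTW k v m1 w m2) \<and>
       real (snd (kDTW_alg k v m1 w m2)) \<le> C * real m1 * real m2 * real (num_dist v m1 w m2)"
  using fst_kDTW_alg snd_kDTW_alg_le by blast

end
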